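(* Let $G$ be a graph, $(\Gamma,\chi)$ a geometric $\ell$-layer drawing of $G$ in general position, $S$ a vertex cover of $G$, and $v\in V(G)\setminus S$. Then there exists a point $p\in C_{\Gamma,S}(v)$ such that cloning $v$ into a new vertex $w$ placed at $p$ yields a geometric $\ell$-layer drawing (in general position) of the resulting graph if and only if $A_{\Gamma,\chi}(v)\neq\emptyset$.
   Context: A straight-line drawing maps vertices to distinct points of $\mathbb{R}^2$, edges being straight segments; a geometric $\ell$-layer drawing $(\Gamma,\chi)$ of $G$ is a straight-line drawing $\Gamma$ with an edge coloring $\chi:E(G)\to[\ell]$ such that no two same-colored edges cross. General position: no three vertices collinear and no three edges crossing at a common point. Cloning $v$ into $w$ placed at $p$ means: add a new vertex $w$ with $N(w)=N_G(v)$, set $\Gamma(w)=p$, and color each edge $wu$ ($u\in N_G(v)$) with $\chi(vu)$. For distinct vertices $v,a,b$: $H_\Gamma(v,a,b)$ is the open half-plane bounded by the line through $\Gamma(a),\Gamma(b)$ not containing $\Gamma(v)$; $T_\Gamma(v,a,b)$ is the interior of the "tie" (double wedge) with center $\Gamma(v)$ and directions $\Gamma(a)-\Gamma(v)$ and $\Gamma(b)-\Gamma(v)$, i.e. the set $\{\Gamma(v)+\lambda(\alpha(\Gamma(a)-\Gamma(v))+\beta(\Gamma(b)-\Gamma(v))): \alpha,\beta>0,\lambda\neq 0\}$. The cell of $v$ is $C_{\Gamma,S}(v)=\mathbb{R}^2\setminus\bigcup_{a,b\in S,a\neq b}H_\Gamma(v,a,b)$. The admissible region is $A_{\Gamma,\chi}(v)=\bigcap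 T_\Gamma(v,a,b)$, the intersection over all distinct $a,b\in N_G(v)$ with $\chi(va)=\chi(vb)$ (the empty intersection being $\mathbb{R}^2$). *)

theory Defs
  imports "HOL-Analysis.Analysis"
begin

definition simple_graph :: "'a set \<Rightarrow> 'a set set \<Rightarrow> bool" where
  "simple_graph V E \<longleftrightarrow> finite V \<and>
     (\<forall>e\<in>E. \<exists>u x. e = {u, x} \<and> u \<noteq> x \<and> u \<in> V \<and> x \<in> V)"

definition nbhd :: "'a set set \<Rightarrow> 'a \<Rightarrow> 'a set" where
  "nbhd E v = {u. {v, u} \<in> E}"

definition vertex_cover :: "'a set \<Rightarrow> 'a set set \<Rightarrow> 'a set \<Rightarrow> bool" where
  "vertex_cover V E S \<longleftrightarrow> S \<subseteq> V \<and> (\<forall>e\<in>E. e \<inter> S \<noteq> {})"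

definition edge_int :: "('a \<Rightarrow> real^2) \<Rightarrow> 'a set \<Rightarrow> (real^2) set" where
  "edge_int \<Gamma> e = \<Union> {open_segment (\<Gamma> u) (\<Gamma> x) | u x. e = {u, x}}"

definition crosses :: "('a \<Rightarrow> real^2) \<Rightarrow> 'a set \<Rightarrow> 'a set \<Rightarrow> bool" where
  "crosses \<Gamma> e f \<longleftrightarrow> e \<noteq> f \<and> edge_int \<Gamma> e \<inter> edge_int \<Gamma> f \<noteq> {}"

definition layer_drawing ::
  "'a set \<Rightarrow> 'a set set \<Rightarrow> nat \<Rightarrow> ('a \<Rightarrow> real^2) \<Rightarrow> ('a set \<Rightarrow> nat) \<Rightarrow> bool" where
  "layer_drawing V E l \<Gamma> col \<longleftrightarrow> inj_on \<Gamma> V \<and> (\<forall>e\<in>E. col e \<in> {1..l}) \<and>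
     (\<forall>e\<in>E. \<forall>f\<in>E. col e = col f \<longrightarrow> \<not> crosses \<Gamma> e f)"

definition general_position :: "'a set \<Rightarrow> 'a set set \<Rightarrow> ('a \<Rightarrow> real^2) \<Rightarrow> bool" where
  "general_position V E \<Gamma> \<longleftrightarrow>
     (\<forall>a\<in>V. \<forall>b\<in>V. \<forall>c\<in>V. distinct [a, b, c] \<longrightarrow> \<not> collinear {\<Gamma> a, \<Gamma> b, \<Gamma> c}) \<and>
     \<not> (\<exists>x. \<exists>e1\<in>E. \<exists>e2\<in>E. \<exists>e3\<in>E. e1 \<noteq> e2 \<and> e1 \<noteq> e3 \<and> e2 \<noteq> e3 \<and>
          x \<in> edge_int \<Gamma> e1 \<and> x \<in> edge_int \<Gamma> e2 \<and> x \<in> edge_int \<Gamma> e3)"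

definition clone_edges :: "'a set set \<Rightarrow> 'a \<Rightarrow> 'a \<Rightarrow> 'a set set" where
  "clone_edges E v w = E \<union> {{w, u} | u. u \<in> nbhd E v}"

definition clone_coloring :: "('a set \<Rightarrow> nat) \<Rightarrow> 'a \<Rightarrow> 'a \<Rightarrow> 'a set \<Rightarrow> nat" where
  "clone_coloring col v w = (\<lambda>e. if w \<in> e then col (insert v (e - {w})) else col e)"

definition cross2 :: "real^2 \<Rightarrow> real^2 \<Rightarrow> real" where
  "cross2 p q = p$1 * q$2 - p$2 * q$1"

(* open half-plane bounded by the line through Gamma a, Gamma b, on the side not containing Gamma v *)
definition halfplane :: "('a \<Rightarrow> real^2) \<Rightarrow> 'a \<Rightarrow> 'a \<Rightarrow> 'a \<Rightarrow> (real^2) set" where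
  "halfplane \<Gamma> v a b =
     {x. cross2 (\<Gamma> b - \<Gamma> a) (x - \<Gamma> a) * cross2 (\<Gamma> b - \<Gamma> a) (\<Gamma> v - \<Gamma> a) < 0}"

(* interior of the tie (double wedge) with centre Gamma v and directions Gamma a - Gamma v, Gamma b - Gamma v *)
definition tie :: "('a \<Rightarrow> real^2) \<Rightarrow> 'a \<Rightarrow> 'a \<Rightarrow> 'a \<Rightarrow> (real^2) set" where
  "tie \<Gamma> v a b = {\<Gamma> v + t *\<^sub>R (\<alpha> *\<^sub>R (\<Gamma> a - \<Gamma> v) + \<beta> *\<^sub>R (\<Gamma> b - \<Gamma> v)) |
                     \<alpha> \<beta> t. \<alpha> > 0 \<and> \<beta> > 0 \<and> t \<noteq> 0}"

definition cell :: "('a \<Rightarrow> real^2) \<Rightarrow> 'a set \<Rightarrow> 'a \<Rightarrow> (real^2) set" where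
  "cell \<Gamma> S v = UNIV - \<Union> {halfplane \<Gamma> v a b | a b. a \<in> S \<and> b \<in> S \<and> a \<noteq> b}"

(* empty intersection is UNIV, as in the paper *)
definition admissible :: "'a set set \<Rightarrow> ('a \<Rightarrow> real^2) \<Rightarrow> ('a set \<Rightarrow> nat) \<Rightarrow> 'a \<Rightarrow> (real^2) set" where
  "admissible E \<Gamma> col v = \<Inter> {tie \<Gamma> v a b | a b. a \<in> nbhd E v \<and> b \<in> nbhd E v \<and> a \<noteq> b \<and>
                                   col {v, a} = col {v, b}}"

end

(*
  Fix two neighbours a, b of v and write p = \<Gamma> v + \<alpha> (\<Gamma> a - \<Gamma> v) + \<beta> (\<Gamma> b - \<Gamma> v).
  In these coordinates the tie T(v,a,b) is the region \<alpha> \<beta> > 0 and the half-plane H(v,a,b) is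
  \<alpha> + \<beta> > 1, while general position of the cloned drawing gives \<alpha> \<noteq> 0, \<beta> \<noteq> 0, \<alpha> + \<beta> \<noteq> 1.
  So if p lies in the cell but outside the tie of two neighbours a, b whose edges to v have the
  same colour, then \<alpha> and \<beta> have opposite signs and \<alpha> + \<beta> < 1, and one of the new edges wa, wb
  crosses the old edge vb or va of the same colour.

  Conversely, the admissible region is an open cone with apex \<Gamma> v, so it has points arbitrarily
  close to \<Gamma> v. Near \<Gamma> v every point lies in the cell, and a new edge wu stays close to the old
  edge vu, so it misses every edge of its colour that is not incident to v or u; an old edge vy of
  that colour is missed because p lies in the tie of u and y. The points on a line through two
  vertices, or through a neighbour of v and a crossing point, form a null set; choosing p off it
  gives general position.
*)
theory Submission
  imports Defs
begin

section \<open>Orientation and affine coordinates in the plane\<close>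

lemma cross2_eq_0: "cross2 x y = 0 \<longleftrightarrow> collinear {0, x, y}"
proof
  assume "cross2 x y = 0"
  then have "x = 0 \<or> y = (y$1 / x$1) *\<^sub>R x \<or> y = (y$2 / x$2) *\<^sub>R x"
    by (auto simp: cross2_def vec_eq_iff forall_2 field_simps)
  then show "collinear {0, x, y}"
    by (auto simp: collinear_lemma)
qed (auto simp: collinear_lemma cross2_def)

lemma collinear_3_iff_cross2: "collinear {a, b, c} \<longleftrightarrow> cross2 (b - a) (c - a) = 0"
proof -
  have "collinear {a, b, c} \<longleftrightarrow> collinear {b, a, c}"
    by (simp add: insert_commute)
  also have "\<dots> \<longleftrightarrow> collinear {0, b - a, c - a}"
    by (rule collinear_3) simp
  finally show ?thesis
    unfolding cross2_eq_0 .
qed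

lemma cross2_combination:
  assumes "cross2 x y \<noteq> 0"
  shows "z = (cross2 z y / cross2 x y) *\<^sub>R x + (cross2 x z / cross2 x y) *\<^sub>R y"
proof -
  have "cross2 z y *\<^sub>R x + cross2 x z *\<^sub>R y = cross2 x y *\<^sub>R z"
    by (simp add: vec_eq_iff forall_2 cross2_def algebra_simps)
  then have "z = (1 / cross2 x y) *\<^sub>R (cross2 z y *\<^sub>R x + cross2 x z *\<^sub>R y)"
    using assms by simp
  then show ?thesis
    by (simp add: scaleR_add_right)
qed

lemma continuous_on_cross2 [continuous_intros]:
  "continuous_on S f \<Longrightarrow> continuous_on S g \<Longrightarrow> continuous_on S (\<lambda>x. cross2 (f x) (g x))"
  unfolding cross2_def by (intro continuous_intros)

lemma affine_coordinates_exist: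
  fixes a b c p :: "real^2"
  assumes "\<not> collinear {c, a, b}"
  obtains \<alpha> \<beta> where "p - c = \<alpha> *\<^sub>R (a - c) + \<beta> *\<^sub>R (b - c)"
  using assms cross2_combination[of "a - c" "b - c" "p - c"] collinear_3_iff_cross2 by blast

lemma cross2_affine_coordinates:
  fixes a b c p :: "real^2"
  assumes "p - c = \<alpha> *\<^sub>R (a - c) + \<beta> *\<^sub>R (b - c)"
  shows "cross2 (p - c) (b - c) = \<alpha> * cross2 (a - c) (b - c)"
    and "cross2 (a - c) (p - c) = \<beta> * cross2 (a - c) (b - c)"
    and "cross2 (b - a) (p - a) = (1 - \<alpha> - \<beta>) * cross2 (a - c) (b - c)"
proof -
  have p: "p = c + \<alpha> *\<^sub>R (a - c) + \<beta> *\<^sub>R (b - c)"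
    using assms by (simp add: algebra_simps)
  show "cross2 (p - c) (b - c) = \<alpha> * cross2 (a - c) (b - c)"
    "cross2 (a - c) (p - c) = \<beta> * cross2 (a - c) (b - c)"
    "cross2 (b - a) (p - a) = (1 - \<alpha> - \<beta>) * cross2 (a - c) (b - c)"
    unfolding p cross2_def by (simp_all add: algebra_simps)
qed

lemma affine_coordinates_unique:
  fixes a b c p :: "real^2"
  assumes "\<not> collinear {c, a, b}"
    and "p - c = \<alpha> *\<^sub>R (a - c) + \<beta> *\<^sub>R (b - c)"
    and "p - c = \<alpha>' *\<^sub>R (a - c) + \<beta>' *\<^sub>R (b - c)"
  shows "\<alpha> = \<alpha>'" and "\<beta> = \<beta>'"
  using assms(1) cross2_affine_coordinates(1,2)[OF assms(2)] cross2_affine_coordinates(1,2)[OF assms(3)]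
  by (simp_all add: collinear_3_iff_cross2)

lemma collinear_affine_coordinates:
  fixes a b c p :: "real^2"
  assumes "\<not> collinear {c, a, b}" and "p - c = \<alpha> *\<^sub>R (a - c) + \<beta> *\<^sub>R (b - c)"
  shows "collinear {c, p, b} \<longleftrightarrow> \<alpha> = 0"
    and "collinear {c, a, p} \<longleftrightarrow> \<beta> = 0"
    and "collinear {a, b, p} \<longleftrightarrow> \<alpha> + \<beta> = 1"
  using assms(1) unfolding collinear_3_iff_cross2 cross2_affine_coordinates[OF assms(2)]
  by auto

lemma tie_iff_affine_coordinates:
  assumes "\<not> collinear {\<Gamma> v, \<Gamma> a, \<Gamma> b}"
    and coords: "p - \<Gamma> v = \<alpha> *\<^sub>R (\<Gamma> a - \<Gamma> v) + \<beta> *\<^sub>R (\<Gamma> b - \<Gamma> v)"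
  shows "p \<in> tie \<Gamma> v a b \<longleftrightarrow> \<alpha> * \<beta> > 0"
proof
  assume "p \<in> tie \<Gamma> v a b"
  then obtain \<alpha>' \<beta>' t where pos: "\<alpha>' > 0" "\<beta>' > 0" "t \<noteq> 0"
    and "p - \<Gamma> v = (t * \<alpha>') *\<^sub>R (\<Gamma> a - \<Gamma> v) + (t * \<beta>') *\<^sub>R (\<Gamma> b - \<Gamma> v)"
    unfolding tie_def by (auto simp: scaleR_add_right)
  then have "\<alpha> = t * \<alpha>'" "\<beta> = t * \<beta>'"
    using affine_coordinates_unique[OF assms] by blast+
  then have "\<alpha> * \<beta> = (t * t) * (\<alpha>' * \<beta>')"
    by simp
  moreover have "t * t > 0"
    using pos(3) by (metis not_real_square_gt_zero)
  ultimately show "\<alpha> * \<beta> > 0"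
    using pos by simp
next
  assume "\<alpha> * \<beta> > 0"
  then consider "\<alpha> > 0" "\<beta> > 0" | "\<alpha> < 0" "\<beta> < 0"
    by (auto simp: zero_less_mult_iff)
  moreover have p: "p = \<Gamma> v + (p - \<Gamma> v)"
    by simp
  ultimately show "p \<in> tie \<Gamma> v a b"
  proof cases
    case 1
    have "p = \<Gamma> v + 1 *\<^sub>R (\<alpha> *\<^sub>R (\<Gamma> a - \<Gamma> v) + \<beta> *\<^sub>R (\<Gamma> b - \<Gamma> v))"
      using p unfolding coords by simp
    with 1 show ?thesis
      unfolding tie_def using one_neq_zero by blast
  next
    case 2
    have "p = \<Gamma> v + (- 1) *\<^sub>R ((- \<alpha>) *\<^sub>R (\<Gamma> a - \<Gamma> v) + (- \<beta>) *\<^sub>R (\<Gamma> b - \<Gamma> v))"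
      using p unfolding coords by simp
    moreover have "- \<alpha> > 0" "- \<beta> > 0" "(- 1 :: real) \<noteq> 0"
      using 2 by simp_all
    ultimately show ?thesis
      unfolding tie_def by blast
  qed
qed

lemma halfplane_iff_affine_coordinates:
  assumes "\<not> collinear {\<Gamma> v, \<Gamma> a, \<Gamma> b}"
    and coords: "p - \<Gamma> v = \<alpha> *\<^sub>R (\<Gamma> a - \<Gamma> v) + \<beta> *\<^sub>R (\<Gamma> b - \<Gamma> v)"
  shows "p \<in> halfplane \<Gamma> v a b \<longleftrightarrow> \<alpha> + \<beta> > 1"
proof -
  define D where "D = cross2 (\<Gamma> a - \<Gamma> v) (\<Gamma> b - \<Gamma> v)"
  have "D \<noteq> 0"
    using assms(1) by (simp add: D_def collinear_3_iff_cross2)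
  then have "D * D > 0"
    by (metis not_real_square_gt_zero)
  have "cross2 (\<Gamma> b - \<Gamma> a) (p - \<Gamma> a) = (1 - \<alpha> - \<beta>) * D"
    unfolding D_def by (rule cross2_affine_coordinates(3)[OF coords])
  moreover have "cross2 (\<Gamma> b - \<Gamma> a) (\<Gamma> v - \<Gamma> a) = D"
    using cross2_affine_coordinates(3)[of "\<Gamma> v" "\<Gamma> v" 0 "\<Gamma> a" 0 "\<Gamma> b"]
    by (simp add: D_def)
  ultimately have "p \<in> halfplane \<Gamma> v a b \<longleftrightarrow> (1 - \<alpha> - \<beta>) * (D * D) < 0"
    unfolding halfplane_def by (simp add: mult.assoc)
  also have "\<dots> \<longleftrightarrow> \<alpha> + \<beta> > 1"
    using \<open>D * D > 0\<close> by (auto simp: mult_less_0_iff)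
  finally show ?thesis .
qed

lemma open_segments_disjoint_if_same_sign:
  fixes a b c p :: "real^2"
  assumes "\<not> collinear {c, a, b}"
    and coords: "p - c = \<alpha> *\<^sub>R (a - c) + \<beta> *\<^sub>R (b - c)" and "\<alpha> * \<beta> > 0"
  shows "open_segment p a \<inter> open_segment c b = {}"
proof (rule ccontr)
  assume "open_segment p a \<inter> open_segment c b \<noteq> {}"
  then obtain z where "z \<in> open_segment p a" "z \<in> open_segment c b"
    by blast
  then obtain s t where s: "0 < s" "s < 1" "z = (1 - s) *\<^sub>R p + s *\<^sub>R a"
    and t: "0 < t" "t < 1" "z = (1 - t) *\<^sub>R c + t *\<^sub>R b"
    unfolding in_segment by blast
  have p: "p = c + \<alpha> *\<^sub>R (a - c) + \<beta> *\<^sub>R (b - c)"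
    using coords by (simp add: algebra_simps)
  have "z - c = ((1 - s) * \<alpha> + s) *\<^sub>R (a - c) + ((1 - s) * \<beta>) *\<^sub>R (b - c)"
    unfolding s(3) p by (simp add: algebra_simps)
  moreover have "z - c = 0 *\<^sub>R (a - c) + t *\<^sub>R (b - c)"
    using t(3) by (simp add: algebra_simps)
  ultimately have "(1 - s) * \<alpha> + s = 0" "(1 - s) * \<beta> = t"
    using affine_coordinates_unique[OF assms(1)] by blast+
  then show False
    using s t assms(3) by (smt (verit) mult_pos_pos mult_neg_pos zero_less_mult_iff)
qed

lemma open_segments_meet_if_opposite_sign:
  fixes a b c p :: "real^2"
  assumes ncol: "\<not> collinear {c, a, b}"
    and coords: "p - c = \<alpha> *\<^sub>R (a - c) + \<beta> *\<^sub>R (b - c)"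
    and "\<alpha> > 0" "\<beta> < 0" "\<alpha> + \<beta> < 1"
  shows "open_segment p b \<inter> open_segment c a \<noteq> {}"
proof -
  define s where "s = \<alpha> / (1 - \<beta>)"
  define t where "t = - \<beta> / (1 - \<beta>)"
  have "a \<noteq> c"
    using ncol by auto
  have "p \<noteq> b"
  proof
    assume "p = b"
    then have "p - c = 0 *\<^sub>R (a - c) + 1 *\<^sub>R (b - c)"
      by simp
    then have "\<alpha> = 0"
      by (rule affine_coordinates_unique(1)[OF ncol coords])
    then show False
      using \<open>\<alpha> > 0\<close> by simp
  qed
  have "0 < s" "s < 1" "0 < t" "t < 1"
    using assms(3-5) by (simp_all add: s_def t_def field_simps)
  have p: "p = c + \<alpha> *\<^sub>R (a - c) + \<beta> *\<^sub>R (b - c)"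
    using coords by (simp add: algebra_simps)
  have st: "(1 - t) * \<alpha> = s" "(1 - t) * \<beta> + t = 0"
    using assms(4) by (simp_all add: s_def t_def field_simps)
  have "(1 - t) *\<^sub>R p + t *\<^sub>R b = c + ((1 - t) * \<alpha>) *\<^sub>R (a - c) + ((1 - t) * \<beta> + t) *\<^sub>R (b - c)"
    unfolding p by (simp add: algebra_simps)
  also have "\<dots> = c + s *\<^sub>R (a - c)"
    unfolding st by simp
  finally have "c + s *\<^sub>R (a - c) \<in> open_segment p b"
    using \<open>p \<noteq> b\<close> \<open>0 < t\<close> \<open>t < 1\<close> unfolding in_segment by (metis add.right_neutral scaleR_zero_left)
  moreover have "c + s *\<^sub>R (a - c) \<in> open_segment c a"
    using \<open>a \<noteq> c\<close> \<open>0 < s\<close> \<open>s < 1\<close> unfolding in_segment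
    by (auto intro!: exI[of _ s] simp: algebra_simps)
  ultimately show ?thesis
    by blast
qed

lemma open_segments_disjoint_if_in_tie:
  assumes ncol: "\<not> collinear {\<Gamma> v, \<Gamma> a, \<Gamma> b}" and "p \<in> tie \<Gamma> v a b"
  shows "open_segment p (\<Gamma> a) \<inter> open_segment (\<Gamma> v) (\<Gamma> b) = {}"
proof -
  obtain \<alpha> \<beta> where coords: "p - \<Gamma> v = \<alpha> *\<^sub>R (\<Gamma> a - \<Gamma> v) + \<beta> *\<^sub>R (\<Gamma> b - \<Gamma> v)"
    using affine_coordinates_exist[OF ncol] .
  have "\<alpha> * \<beta> > 0"
    using \<open>p \<in> tie \<Gamma> v a b\<close> tie_iff_affine_coordinates[of \<Gamma> v a b, OF ncol coords] by simp
  then show ?thesis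
    by (rule open_segments_disjoint_if_same_sign[OF ncol coords])
qed

lemma in_tie_if_open_segments_disjoint:
  assumes ncol: "\<not> collinear {\<Gamma> v, \<Gamma> a, \<Gamma> b}"
    and "\<not> collinear {\<Gamma> v, p, \<Gamma> b}" "\<not> collinear {\<Gamma> v, \<Gamma> a, p}" "\<not> collinear {\<Gamma> a, \<Gamma> b, p}"
    and "p \<notin> halfplane \<Gamma> v a b"
    and "open_segment p (\<Gamma> a) \<inter> open_segment (\<Gamma> v) (\<Gamma> b) = {}"
    and "open_segment p (\<Gamma> b) \<inter> open_segment (\<Gamma> v) (\<Gamma> a) = {}"
  shows "p \<in> tie \<Gamma> v a b"
proof -
  obtain \<alpha> \<beta> where coords: "p - \<Gamma> v = \<alpha> *\<^sub>R (\<Gamma> a - \<Gamma> v) + \<beta> *\<^sub>R (\<Gamma> b - \<Gamma> v)"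
    using affine_coordinates_exist[OF ncol] .
  have "\<alpha> \<noteq> 0" "\<beta> \<noteq> 0" "\<alpha> + \<beta> \<noteq> 1"
    using assms(2-4) unfolding collinear_affine_coordinates[OF ncol coords] .
  moreover have "\<alpha> + \<beta> < 1"
    using assms(5) halfplane_iff_affine_coordinates[of \<Gamma> v a b, OF ncol coords] \<open>\<alpha> + \<beta> \<noteq> 1\<close> by simp
  moreover have "\<not> collinear {\<Gamma> v, \<Gamma> b, \<Gamma> a}"
    using ncol by (simp add: insert_commute)
  moreover have "p - \<Gamma> v = \<beta> *\<^sub>R (\<Gamma> b - \<Gamma> v) + \<alpha> *\<^sub>R (\<Gamma> a - \<Gamma> v)"
    using coords by simp
  ultimately have "\<alpha> * \<beta> > 0"
    using assms(6,7) open_segments_meet_if_opposite_sign[OF ncol coords]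
      open_segments_meet_if_opposite_sign[of "\<Gamma> v" "\<Gamma> b" "\<Gamma> a" p \<beta> \<alpha>]
    by (auto simp: zero_less_mult_iff linorder_neq_iff)
  then show ?thesis
    using tie_iff_affine_coordinates[of \<Gamma> v a b, OF ncol coords] by simp
qed

lemma tie_iff_cross2:
  assumes "\<not> collinear {\<Gamma> v, \<Gamma> a, \<Gamma> b}"
  shows "p \<in> tie \<Gamma> v a b \<longleftrightarrow>
    cross2 (p - \<Gamma> v) (\<Gamma> b - \<Gamma> v) * cross2 (\<Gamma> a - \<Gamma> v) (p - \<Gamma> v) > 0"
proof -
  obtain \<alpha> \<beta> where coords: "p - \<Gamma> v = \<alpha> *\<^sub>R (\<Gamma> a - \<Gamma> v) + \<beta> *\<^sub>R (\<Gamma> b - \<Gamma> v)"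
    using affine_coordinates_exist[OF assms] .
  define D where "D = cross2 (\<Gamma> a - \<Gamma> v) (\<Gamma> b - \<Gamma> v)"
  have "D \<noteq> 0"
    using assms by (simp add: D_def collinear_3_iff_cross2)
  then have "D * D > 0"
    by (metis not_real_square_gt_zero)
  have "cross2 (p - \<Gamma> v) (\<Gamma> b - \<Gamma> v) * cross2 (\<Gamma> a - \<Gamma> v) (p - \<Gamma> v) = (\<alpha> * \<beta>) * (D * D)"
    unfolding cross2_affine_coordinates(1,2)[OF coords] D_def by simp
  then show ?thesis
    using tie_iff_affine_coordinates[of \<Gamma> v a b, OF assms coords]
      \<open>D * D > 0\<close> by (simp add: zero_less_mult_iff)
qed

lemma open_tie:
  assumes "\<not> collinear {\<Gamma> v, \<Gamma> a, \<Gamma> b}"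
  shows "open (tie \<Gamma> v a b)"
proof -
  have "tie \<Gamma> v a b =
      {p. 0 < cross2 (p - \<Gamma> v) (\<Gamma> b - \<Gamma> v) * cross2 (\<Gamma> a - \<Gamma> v) (p - \<Gamma> v)}"
    using tie_iff_cross2[of \<Gamma> v a b, OF assms] by blast
  then show ?thesis
    by (simp add: open_Collect_less continuous_intros)
qed

lemma tie_scaled:
  assumes "p \<in> tie \<Gamma> v a b" and "s \<noteq> 0"
  shows "\<Gamma> v + s *\<^sub>R (p - \<Gamma> v) \<in> tie \<Gamma> v a b"
proof -
  obtain \<alpha> \<beta> t where "\<alpha> > 0" "\<beta> > 0" "t \<noteq> 0"
    and p: "p = \<Gamma> v + t *\<^sub>R (\<alpha> *\<^sub>R (\<Gamma> a - \<Gamma> v) + \<beta> *\<^sub>R (\<Gamma> b - \<Gamma> v))"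
    using assms(1) unfolding tie_def by blast
  moreover have "\<Gamma> v + s *\<^sub>R (p - \<Gamma> v) =
      \<Gamma> v + (s * t) *\<^sub>R (\<alpha> *\<^sub>R (\<Gamma> a - \<Gamma> v) + \<beta> *\<^sub>R (\<Gamma> b - \<Gamma> v))"
    unfolding p by simp
  moreover have "s * t \<noteq> 0"
    using assms(2) \<open>t \<noteq> 0\<close> by simp
  ultimately show ?thesis
    unfolding tie_def by blast
qed

lemma eventually_not_in_halfplane:
  assumes "\<not> collinear {\<Gamma> a, \<Gamma> b, \<Gamma> v}"
  shows "\<forall>\<^sub>F p in nhds (\<Gamma> v). p \<notin> halfplane \<Gamma> v a b"
proof -
  define h where "h p = cross2 (\<Gamma> b - \<Gamma> a) (p - \<Gamma> a) * cross2 (\<Gamma> b - \<Gamma> a) (\<Gamma> v - \<Gamma> a)" for p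
  have "open {p. 0 < h p}"
    unfolding h_def by (simp add: open_Collect_less continuous_intros)
  moreover have "0 < h (\<Gamma> v)"
    using assms unfolding h_def collinear_3_iff_cross2 by (metis not_real_square_gt_zero)
  ultimately have "\<forall>\<^sub>F p in nhds (\<Gamma> v). p \<in> {p. 0 < h p}"
    by (intro eventually_nhds_in_open) simp_all
  then show ?thesis
    by eventually_elim (simp add: halfplane_def h_def)
qed

section \<open>Segments, lines and null sets\<close>

lemma collinear_if_in_open_segment:
  assumes "z \<in> open_segment a b"
  shows "collinear {a, b, z}"
proof (rule collinear_subset[OF collinear_closed_segment])
  show "{a, b, z} \<subseteq> closed_segment a b"
    using assms open_closed_segment by auto
qed

lemma open_segments_disjoint_if_not_collinear:
  assumes "\<not> collinear {a, b, c}"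
  shows "open_segment a b \<inter> open_segment a c = {}"
proof (rule ccontr)
  assume "open_segment a b \<inter> open_segment a c \<noteq> {}"
  then obtain z where z: "z \<in> open_segment a b" "z \<in> open_segment a c"
    by blast
  then have "z \<noteq> a"
    by (auto simp: open_segment_def)
  moreover have "collinear {b, a, z}" "collinear {a, z, c}"
    using z collinear_if_in_open_segment by (metis insert_commute)+
  ultimately have "collinear {b, a, c}"
    using collinear_3_trans by blast
  then show False
    using assms by (simp add: insert_commute)
qed

lemma collinear_if_open_segments_share_two_points:
  assumes "z1 \<in> open_segment a b" "z1 \<in> open_segment c d"
    and "z2 \<in> open_segment a b" "z2 \<in> open_segment c d" and "z1 \<noteq> z2"
  shows "collinear {a, b, c, d}"
proof -
  have "{z1, z2, a, b} \<subseteq> closed_segment a b" "{z1, z2, c, d} \<subseteq> closed_segment c d"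
    using assms open_closed_segment by auto
  then have "collinear {z1, z2, a, b}" "collinear {z1, z2, c, d}"
    using collinear_closed_segment collinear_subset by blast+
  then have "\<forall>x\<in>{a, b, c, d}. collinear {z1, z2, x}"
    using collinear_triples[OF assms(5), of "{a, b}"] collinear_triples[OF assms(5), of "{c, d}"]
    by simp
  then have "collinear (insert z1 (insert z2 {a, b, c, d}))"
    using collinear_triples[OF assms(5)] by blast
  then show ?thesis
    by (rule collinear_subset) auto
qed

lemma negligible_collinear:
  fixes a b :: "real^2"
  assumes "a \<noteq> b"
  shows "negligible {p. collinear {a, b, p}}"
proof -
  define n :: "real^2" where "n = (\<chi> i. if i = 1 then a$2 - b$2 else b$1 - a$1)"
  have "n \<noteq> 0"
    using assms by (auto simp: n_def vec_eq_iff forall_2)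
  moreover have "collinear {a, b, p} \<longleftrightarrow> n \<bullet> p = n \<bullet> a" for p
    unfolding collinear_3_iff_cross2 cross2_def inner_vec_def sum_2 n_def
    by (simp add: algebra_simps)
  ultimately show ?thesis
    using negligible_hyperplane[of n "n \<bullet> a"] by simp
qed

lemma eventually_closed_segment_disjoint:
  fixes c u :: "'a::euclidean_space"
  assumes "closed K" and "closed_segment c u \<inter> K = {}"
  shows "\<forall>\<^sub>F p in nhds c. closed_segment p u \<inter> K = {}"
proof -
  obtain d where "d > 0" and d: "\<And>x y. x \<in> closed_segment c u \<Longrightarrow> y \<in> K \<Longrightarrow> d \<le> dist x y"
    using separate_compact_closed[OF compact_segment assms] by metis
  have "closed_segment p u \<inter> K = {}" if "dist p c < d" for p
  proof (rule ccontr)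
    assume "closed_segment p u \<inter> K \<noteq> {}"
    then obtain y where "y \<in> closed_segment p u" "y \<in> K"
      by blast
    then obtain t where t: "0 \<le> t" "t \<le> 1" and y: "y = (1 - t) *\<^sub>R p + t *\<^sub>R u"
      unfolding in_segment by blast
    define x where "x = (1 - t) *\<^sub>R c + t *\<^sub>R u"
    have "x \<in> closed_segment c u"
      unfolding in_segment x_def using t by blast
    have "x - y = (1 - t) *\<^sub>R (c - p)"
      by (simp add: x_def y algebra_simps)
    then have "dist x y = (1 - t) * dist c p"
      using t by (simp add: dist_norm)
    also have "\<dots> \<le> dist p c"
      using t by (simp add: dist_commute mult_left_le_one_le)
    also have "\<dots> < d"
      by (fact that)
    finally show False
      using d[OF \<open>x \<in> closed_segment c u\<close> \<open>y \<in> K\<close>] by simp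
  qed
  then show ?thesis
    using \<open>d > 0\<close> unfolding eventually_nhds_metric by blast
qed

section \<open>Cloning a vertex\<close>

lemma edge_int_doubleton: "edge_int \<Gamma> {a, b} = open_segment (\<Gamma> a) (\<Gamma> b)"
proof -
  have "{open_segment (\<Gamma> u) (\<Gamma> x) | u x. {a, b} = {u, x}} =
      {open_segment (\<Gamma> a) (\<Gamma> b), open_segment (\<Gamma> b) (\<Gamma> a)}"
    by (auto simp: doubleton_eq_iff)
  then show ?thesis
    unfolding edge_int_def by (simp add: open_segment_commute)
qed

lemma edge_int_fun_upd:
  assumes "w \<notin> e"
  shows "edge_int (\<Gamma>(w := p)) e = edge_int \<Gamma> e"
proof -
  have "{open_segment ((\<Gamma>(w := p)) u) ((\<Gamma>(w := p)) x) | u x. e = {u, x}} =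
      {open_segment (\<Gamma> u) (\<Gamma> x) | u x. e = {u, x}}"
    using assms by fastforce
  then show ?thesis
    unfolding edge_int_def by simp
qed

lemma clone_edges_iff: "e \<in> clone_edges E v w \<longleftrightarrow> e \<in> E \<or> (\<exists>u\<in>nbhd E v. e = {w, u})"
  unfolding clone_edges_def by blast

lemma clone_coloring_new_edge:
  assumes "u \<noteq> w"
  shows "clone_coloring col v w {w, u} = col {v, u}"
proof -
  have "insert v ({w, u} - {w}) = {v, u}"
    using assms by auto
  then show ?thesis
    by (simp add: clone_coloring_def)
qed

lemma clone_coloring_old_edge: "w \<notin> e \<Longrightarrow> clone_coloring col v w e = col e"
  by (simp add: clone_coloring_def)

lemma admissibleD:
  "p \<in> admissible E \<Gamma> col v \<Longrightarrow> a \<in> nbhd E v \<Longrightarrow> b \<in> nbhd E v \<Longrightarrow> a \<noteq> b \<Longrightarrow>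
    col {v, a} = col {v, b} \<Longrightarrow> p \<in> tie \<Gamma> v a b"
  unfolding admissible_def by blast

lemma admissible_scaled:
  assumes "q \<in> admissible E \<Gamma> col v" and "s \<noteq> 0"
  shows "\<Gamma> v + s *\<^sub>R (q - \<Gamma> v) \<in> admissible E \<Gamma> col v"
  unfolding admissible_def
proof (rule InterI)
  fix T
  assume "T \<in> {tie \<Gamma> v a b | a b. a \<in> nbhd E v \<and> b \<in> nbhd E v \<and> a \<noteq> b \<and> col {v, a} = col {v, b}}"
  then obtain a b where T: "T = tie \<Gamma> v a b" and "q \<in> tie \<Gamma> v a b"
    using assms(1) unfolding admissible_def by blast
  show "\<Gamma> v + s *\<^sub>R (q - \<Gamma> v) \<in> T"
    unfolding T by (rule tie_scaled[OF \<open>q \<in> tie \<Gamma> v a b\<close> assms(2)])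
qed

lemma admissible_near_centre:
  assumes "admissible E \<Gamma> col v \<noteq> {}" and "\<delta> > 0"
  obtains q where "q \<in> admissible E \<Gamma> col v" and "dist q (\<Gamma> v) < \<delta>"
proof -
  obtain q where q: "q \<in> admissible E \<Gamma> col v"
    using assms(1) by blast
  define n where "n = norm (q - \<Gamma> v)"
  have "n \<ge> 0"
    by (simp add: n_def)
  define s where "s = \<delta> / (n + 1)"
  have "s > 0"
    using \<open>\<delta> > 0\<close> \<open>n \<ge> 0\<close> by (simp add: s_def)
  have "dist (\<Gamma> v + s *\<^sub>R (q - \<Gamma> v)) (\<Gamma> v) = \<delta> * (n / (n + 1))"
    using \<open>s > 0\<close> \<open>\<delta> > 0\<close> by (simp add: s_def n_def dist_norm)
  also have "\<dots> < \<delta> * 1"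
    using \<open>\<delta> > 0\<close> \<open>n \<ge> 0\<close> by (intro mult_strict_left_mono) (simp_all add: divide_less_eq_1)
  moreover have "\<Gamma> v + s *\<^sub>R (q - \<Gamma> v) \<in> admissible E \<Gamma> col v"
    using admissible_scaled[OF q] \<open>s > 0\<close> by simp
  ultimately show thesis
    using that by simp
qed

lemma negligible_open_segments_through:
  fixes c z :: "real^2"
  shows "negligible {p. z \<in> open_segment p c}"
proof (cases "z = c")
  case True
  then show ?thesis
    by (simp add: open_segment_def)
next
  case False
  have "collinear {c, z, p}" if "z \<in> open_segment p c" for p
    using collinear_if_in_open_segment[OF that] by (simp add: insert_commute)
  then have "{p. z \<in> open_segment p c} \<subseteq> {p. collinear {c, z, p}}"
    by blast
  then show ?thesis
    using negligible_subset negligible_collinear[OF False[symmetric]] by blast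
qed

lemma negligible_UN:
  "finite A \<Longrightarrow> (\<And>a. a \<in> A \<Longrightarrow> negligible (B a)) \<Longrightarrow> negligible (\<Union>a\<in>A. B a)"
  by (intro negligible_Union) auto

locale vertex_clone =
  fixes V :: "'a set" and E :: "'a set set" and l :: nat
    and \<Gamma> :: "'a \<Rightarrow> real^2" and col :: "'a set \<Rightarrow> nat" and S :: "'a set" and v w :: 'a
  assumes graph: "simple_graph V E"
    and drawing: "layer_drawing V E l \<Gamma> col"
    and gen_pos: "general_position V E \<Gamma>"
    and cover: "vertex_cover V E S"
    and v_in_V: "v \<in> V" and v_notin_S: "v \<notin> S"
    and w_notin_V: "w \<notin> V"
begin

abbreviation N :: "'a set" where "N \<equiv> nbhd E v"

lemma finite_V: "finite V"
  using graph by (simp add: simple_graph_def)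

lemma edgeE:
  assumes "e \<in> E"
  obtains x y where "e = {x, y}" "x \<noteq> y" "x \<in> V" "y \<in> V"
  using graph assms by (auto simp: simple_graph_def)

lemma finite_E: "finite E"
proof (rule finite_subset)
  show "E \<subseteq> Pow V"
    using edgeE by blast
qed (simp add: finite_V)

lemma w_notin_edge: "e \<in> E \<Longrightarrow> w \<notin> e"
  using w_notin_V by (auto elim: edgeE)

lemma v_neq_w: "v \<noteq> w"
  using v_in_V w_notin_V by blast

lemma neighbourD:
  assumes "u \<in> N"
  shows "{v, u} \<in> E" and "u \<in> V" and "u \<noteq> v" and "u \<noteq> w" and "u \<in> S"
proof -
  show "{v, u} \<in> E"
    using assms by (simp add: nbhd_def)
  then show "u \<in> V" "u \<noteq> v"
    by (auto elim!: edgeE simp: doubleton_eq_iff)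
  then show "u \<noteq> w"
    using w_notin_V by blast
  have "{v, u} \<inter> S \<noteq> {}"
    using cover \<open>{v, u} \<in> E\<close> unfolding vertex_cover_def by blast
  then show "u \<in> S"
    using v_notin_S by auto
qed

lemma finite_N: "finite N"
  by (rule finite_subset[OF _ finite_V]) (auto dest: neighbourD(2))

lemma not_collinear:
  "a \<in> V \<Longrightarrow> b \<in> V \<Longrightarrow> c \<in> V \<Longrightarrow> a \<noteq> b \<Longrightarrow> a \<noteq> c \<Longrightarrow> b \<noteq> c \<Longrightarrow>
    \<not> collinear {\<Gamma> a, \<Gamma> b, \<Gamma> c}"
  using gen_pos by (simp add: general_position_def)

lemma drawing_inj: "a \<in> V \<Longrightarrow> b \<in> V \<Longrightarrow> a \<noteq> b \<Longrightarrow> \<Gamma> a \<noteq> \<Gamma> b"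
  using drawing by (auto simp: layer_drawing_def inj_on_def)

lemma same_colour_edges_disjoint:
  "e \<in> E \<Longrightarrow> f \<in> E \<Longrightarrow> e \<noteq> f \<Longrightarrow> col e = col f \<Longrightarrow> edge_int \<Gamma> e \<inter> edge_int \<Gamma> f = {}"
  using drawing by (auto simp: layer_drawing_def crosses_def)

lemma edge_colour_range: "e \<in> E \<Longrightarrow> col e \<in> {1..l}"
  using drawing by (simp add: layer_drawing_def)

lemma no_triple_crossing:
  "e1 \<in> E \<Longrightarrow> e2 \<in> E \<Longrightarrow> e3 \<in> E \<Longrightarrow> e1 \<noteq> e2 \<Longrightarrow> e1 \<noteq> e3 \<Longrightarrow> e2 \<noteq> e3 \<Longrightarrow>
    x \<in> edge_int \<Gamma> e1 \<Longrightarrow> x \<in> edge_int \<Gamma> e2 \<Longrightarrow> x \<notin> edge_int \<Gamma> e3"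
  using gen_pos unfolding general_position_def by blast

lemma edge_int_clone_new: "u \<in> N \<Longrightarrow> edge_int (\<Gamma>(w := p)) {w, u} = open_segment p (\<Gamma> u)"
  using neighbourD(4) by (simp add: edge_int_doubleton)

lemma edge_int_clone_old: "e \<in> E \<Longrightarrow> edge_int (\<Gamma>(w := p)) e = edge_int \<Gamma> e"
  by (simp add: edge_int_fun_upd w_notin_edge)

lemma clone_drawing_segments_disjoint:
  assumes "layer_drawing (insert w V) (clone_edges E v w) l (\<Gamma>(w := p)) (clone_coloring col v w)"
    and "x \<in> N" and "y \<in> N" and "col {v, x} = col {v, y}"
  shows "open_segment p (\<Gamma> x) \<inter> open_segment (\<Gamma> v) (\<Gamma> y) = {}"
proof -
  have "{w, x} \<in> clone_edges E v w" "{v, y} \<in> clone_edges E v w"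
    using assms(2,3) neighbourD(1) by (auto simp: clone_edges_iff)
  moreover have "clone_coloring col v w {w, x} = clone_coloring col v w {v, y}"
    using assms(2-4) neighbourD(1,4)[OF assms(2)] w_notin_edge[OF neighbourD(1)[OF assms(3)]]
    by (simp add: clone_coloring_new_edge clone_coloring_old_edge)
  moreover have "{w, x} \<noteq> {v, y}"
    using v_neq_w neighbourD(4)[OF assms(3)] by (auto simp: doubleton_eq_iff)
  ultimately have "edge_int (\<Gamma>(w := p)) {w, x} \<inter> edge_int (\<Gamma>(w := p)) {v, y} = {}"
    using assms(1) unfolding layer_drawing_def crosses_def by blast
  moreover have "x \<noteq> w" "y \<noteq> w"
    using assms(2,3) by (simp_all add: neighbourD(4))
  ultimately show ?thesis
    using v_neq_w by (simp add: edge_int_doubleton)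
qed

lemma in_admissible_if_clone_drawing:
  assumes "p \<in> cell \<Gamma> S v"
    and clone_drawing: "layer_drawing (insert w V) (clone_edges E v w) l (\<Gamma>(w := p)) (clone_coloring col v w)"
    and clone_gen_pos: "general_position (insert w V) (clone_edges E v w) (\<Gamma>(w := p))"
  shows "p \<in> admissible E \<Gamma> col v"
proof -
  have off_lines: "\<not> collinear {\<Gamma> x, \<Gamma> y, p}"
    if "x \<in> V" "y \<in> V" "x \<noteq> y" for x y
  proof -
    have "\<not> collinear {(\<Gamma>(w := p)) x, (\<Gamma>(w := p)) y, (\<Gamma>(w := p)) w}"
      using clone_gen_pos that w_notin_V unfolding general_position_def by auto
    moreover have "x \<noteq> w" "y \<noteq> w"
      using that w_notin_V by blast+
    ultimately show ?thesis
      by simp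
  qed
  have "p \<in> tie \<Gamma> v a b"
    if a: "a \<in> N" and b: "b \<in> N" and "a \<noteq> b" and ab: "col {v, a} = col {v, b}" for a b
  proof (rule in_tie_if_open_segments_disjoint)
    show "\<not> collinear {\<Gamma> v, \<Gamma> a, \<Gamma> b}"
      using not_collinear v_in_V neighbourD(2,3) a b \<open>a \<noteq> b\<close> by metis
    show "\<not> collinear {\<Gamma> v, p, \<Gamma> b}" "\<not> collinear {\<Gamma> v, \<Gamma> a, p}" "\<not> collinear {\<Gamma> a, \<Gamma> b, p}"
      using off_lines v_in_V neighbourD(2,3) a b \<open>a \<noteq> b\<close>
      by (simp_all add: insert_commute)
    show "p \<notin> halfplane \<Gamma> v a b"
      using \<open>p \<in> cell \<Gamma> S v\<close> neighbourD(5) a b \<open>a \<noteq> b\<close> unfolding cell_def by blast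
    show "open_segment p (\<Gamma> a) \<inter> open_segment (\<Gamma> v) (\<Gamma> b) = {}"
      "open_segment p (\<Gamma> b) \<inter> open_segment (\<Gamma> v) (\<Gamma> a) = {}"
      using clone_drawing_segments_disjoint[OF clone_drawing] a b ab by simp_all
  qed
  then show ?thesis
    unfolding admissible_def by blast
qed

lemma edges_cross_at_most_once:
  assumes "e \<in> E" "f \<in> E" "e \<noteq> f"
    and "z1 \<in> edge_int \<Gamma> e \<inter> edge_int \<Gamma> f" "z2 \<in> edge_int \<Gamma> e \<inter> edge_int \<Gamma> f"
  shows "z1 = z2"
proof (rule ccontr)
  assume "z1 \<noteq> z2"
  obtain a b where ab: "e = {a, b}" "a \<noteq> b" "a \<in> V" "b \<in> V"
    using assms(1) by (rule edgeE)
  obtain c d where cd: "f = {c, d}" "c \<noteq> d" "c \<in> V" "d \<in> V"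
    using assms(2) by (rule edgeE)
  have "collinear {\<Gamma> a, \<Gamma> b, \<Gamma> c, \<Gamma> d}"
    using assms(4,5) \<open>z1 \<noteq> z2\<close> collinear_if_open_segments_share_two_points
    unfolding ab(1) cd(1) edge_int_doubleton by blast
  moreover have "c \<notin> {a, b} \<or> d \<notin> {a, b}"
    using ab(1) cd(1,2) assms(3) by auto
  then obtain x where "x \<in> {c, d}" "x \<noteq> a" "x \<noteq> b"
    by blast
  then have "x \<in> V" "{\<Gamma> a, \<Gamma> b, \<Gamma> x} \<subseteq> {\<Gamma> a, \<Gamma> b, \<Gamma> c, \<Gamma> d}"
    using cd by auto
  ultimately have "collinear {\<Gamma> a, \<Gamma> b, \<Gamma> x}"
    using collinear_subset by blast
  then show False
    using not_collinear[OF ab(3,4) \<open>x \<in> V\<close> ab(2)] \<open>x \<noteq> a\<close> \<open>x \<noteq> b\<close> by auto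
qed

lemma vertex_on_closed_edge:
  assumes "a \<in> V" "b \<in> V" "c \<in> V" "a \<noteq> b" and "\<Gamma> c \<in> closed_segment (\<Gamma> a) (\<Gamma> b)"
  shows "c = a \<or> c = b"
proof (rule ccontr)
  assume "\<not> (c = a \<or> c = b)"
  then have "\<Gamma> c \<in> open_segment (\<Gamma> a) (\<Gamma> b)"
    using assms drawing_inj by (simp add: open_segment_def)
  then have "collinear {\<Gamma> a, \<Gamma> b, \<Gamma> c}"
    by (rule collinear_if_in_open_segment)
  then show False
    using not_collinear assms \<open>\<not> (c = a \<or> c = b)\<close> by blast
qed

lemma same_colour_closed_edges_disjoint:
  assumes "u \<in> N" "e \<in> E" "v \<notin> e" "u \<notin> e" "col e = col {v, u}" and "e = {x, y}"
  shows "closed_segment (\<Gamma> v) (\<Gamma> u) \<inter> closed_segment (\<Gamma> x) (\<Gamma> y) = {}"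
proof (rule ccontr)
  assume "closed_segment (\<Gamma> v) (\<Gamma> u) \<inter> closed_segment (\<Gamma> x) (\<Gamma> y) \<noteq> {}"
  then obtain z where z: "z \<in> closed_segment (\<Gamma> v) (\<Gamma> u)" "z \<in> closed_segment (\<Gamma> x) (\<Gamma> y)"
    by blast
  have "x \<in> V" "y \<in> V" "x \<noteq> y"
    using assms(2,6) by (auto elim!: edgeE simp: doubleton_eq_iff)
  note vu = v_in_V neighbourD(2,3)[OF assms(1)]
  consider "z \<in> open_segment (\<Gamma> v) (\<Gamma> u)" "z \<in> open_segment (\<Gamma> x) (\<Gamma> y)"
    | t where "t \<in> {v, u}" "\<Gamma> t \<in> closed_segment (\<Gamma> x) (\<Gamma> y)"
    | t where "t \<in> {x, y}" "\<Gamma> t \<in> closed_segment (\<Gamma> v) (\<Gamma> u)"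
    using z unfolding closed_segment_eq_open by blast
  then show False
  proof cases
    case 1
    have "{v, u} \<noteq> e"
      using assms(3) by blast
    then show False
      using same_colour_edges_disjoint[OF neighbourD(1)[OF assms(1)] assms(2)] assms(5,6) 1
      by (auto simp: edge_int_doubleton)
  next
    case 2
    then show False
      using vertex_on_closed_edge[of x y t] vu \<open>x \<in> V\<close> \<open>y \<in> V\<close> \<open>x \<noteq> y\<close> assms(3,4,6) by auto
  next
    case 3
    then show False
      using vertex_on_closed_edge[of v u t] vu \<open>x \<in> V\<close> \<open>y \<in> V\<close> assms(3,4,6) by auto
  qed
qed

definition avoids_vertex_lines :: "real^2 \<Rightarrow> bool" where
  "avoids_vertex_lines p \<longleftrightarrow> (\<forall>a\<in>V. \<forall>b\<in>V. a \<noteq> b \<longrightarrow> \<not> collinear {\<Gamma> a, \<Gamma> b, p})"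

definition new_edges_clear :: "real^2 \<Rightarrow> bool" where
  "new_edges_clear p \<longleftrightarrow> (\<forall>u\<in>N. \<forall>e\<in>E. v \<notin> e \<longrightarrow> u \<notin> e \<longrightarrow> col e = col {v, u} \<longrightarrow>
     open_segment p (\<Gamma> u) \<inter> edge_int \<Gamma> e = {})"

definition avoids_crossings :: "real^2 \<Rightarrow> bool" where
  "avoids_crossings p \<longleftrightarrow> (\<forall>u\<in>N. \<forall>e\<in>E. \<forall>f\<in>E. e \<noteq> f \<longrightarrow>
     open_segment p (\<Gamma> u) \<inter> edge_int \<Gamma> e \<inter> edge_int \<Gamma> f = {})"

lemma eventually_in_cell: "\<forall>\<^sub>F p in nhds (\<Gamma> v). p \<in> cell \<Gamma> S v"
proof -
  have "S \<subseteq> V"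
    using cover by (simp add: vertex_cover_def)
  then have "finite S"
    using finite_V by (rule finite_subset)
  have "\<forall>\<^sub>F p in nhds (\<Gamma> v). \<forall>a\<in>S. \<forall>b\<in>S. a \<noteq> b \<longrightarrow> p \<notin> halfplane \<Gamma> v a b"
  proof (intro eventually_ball_finite \<open>finite S\<close> ballI)
    fix a b
    assume "a \<in> S" "b \<in> S"
    show "\<forall>\<^sub>F p in nhds (\<Gamma> v). a \<noteq> b \<longrightarrow> p \<notin> halfplane \<Gamma> v a b"
    proof (cases "a = b")
      case False
      have "a \<noteq> v" "b \<noteq> v"
        using \<open>a \<in> S\<close> \<open>b \<in> S\<close> v_notin_S by blast+
      then have "\<not> collinear {\<Gamma> a, \<Gamma> b, \<Gamma> v}"
        using not_collinear \<open>a \<in> S\<close> \<open>b \<in> S\<close> \<open>S \<subseteq> V\<close> v_in_V False by blast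
      then show ?thesis
        using eventually_not_in_halfplane[of \<Gamma> a b v] by simp
    qed simp
  qed
  then show ?thesis
    by eventually_elim (auto simp: cell_def)
qed

lemma eventually_new_edges_clear: "\<forall>\<^sub>F p in nhds (\<Gamma> v). new_edges_clear p"
  unfolding new_edges_clear_def
proof (intro eventually_ball_finite finite_N finite_E ballI)
  fix u e
  assume "u \<in> N" "e \<in> E"
  show "\<forall>\<^sub>F p in nhds (\<Gamma> v). v \<notin> e \<longrightarrow> u \<notin> e \<longrightarrow> col e = col {v, u} \<longrightarrow>
      open_segment p (\<Gamma> u) \<inter> edge_int \<Gamma> e = {}"
  proof (cases "v \<notin> e \<and> u \<notin> e \<and> col e = col {v, u}")
    case True
    obtain x y where e: "e = {x, y}"
      using \<open>e \<in> E\<close> by (rule edgeE)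
    then have "closed_segment (\<Gamma> v) (\<Gamma> u) \<inter> closed_segment (\<Gamma> x) (\<Gamma> y) = {}"
      using same_colour_closed_edges_disjoint[OF \<open>u \<in> N\<close> \<open>e \<in> E\<close>] True by blast
    then have "\<forall>\<^sub>F p in nhds (\<Gamma> v). closed_segment p (\<Gamma> u) \<inter> closed_segment (\<Gamma> x) (\<Gamma> y) = {}"
      by (rule eventually_closed_segment_disjoint[OF closed_segment])
    then show ?thesis
    proof eventually_elim
      case (elim p)
      then show ?case
        unfolding e edge_int_doubleton using open_closed_segment by blast
    qed
  next
    case False
    then show ?thesis
      by (intro always_eventually) blast
  qed
qed

lemma open_admissible: "open (admissible E \<Gamma> col v)"
  unfolding admissible_def
proof (intro open_Inter ballI)
  have "finite {tie \<Gamma> v a b | a b. a \<in> N \<and> b \<in> N}"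
    using finite_N by (simp add: finite_image_set2)
  then show "finite {tie \<Gamma> v a b | a b. a \<in> N \<and> b \<in> N \<and> a \<noteq> b \<and> col {v, a} = col {v, b}}"
    by (rule rev_finite_subset) blast
next
  fix T
  assume "T \<in> {tie \<Gamma> v a b | a b. a \<in> N \<and> b \<in> N \<and> a \<noteq> b \<and> col {v, a} = col {v, b}}"
  then obtain a b where T: "T = tie \<Gamma> v a b" and "a \<in> N" "b \<in> N" "a \<noteq> b"
    by blast
  then have "\<not> collinear {\<Gamma> v, \<Gamma> a, \<Gamma> b}"
    using not_collinear[of v a b] v_in_V neighbourD(2,3) by fastforce
  then show "open T"
    unfolding T by (rule open_tie)
qed

lemma negligible_crossing_lines:
  assumes "e \<in> E" "f \<in> E" "e \<noteq> f"
  shows "negligible {p. open_segment p c \<inter> edge_int \<Gamma> e \<inter> edge_int \<Gamma> f \<noteq> {}}"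
proof (cases "edge_int \<Gamma> e \<inter> edge_int \<Gamma> f = {}")
  case False
  then obtain z where z: "z \<in> edge_int \<Gamma> e \<inter> edge_int \<Gamma> f"
    by blast
  then have "{p. open_segment p c \<inter> edge_int \<Gamma> e \<inter> edge_int \<Gamma> f \<noteq> {}} \<subseteq> {p. z \<in> open_segment p c}"
    using edges_cross_at_most_once[OF assms _ z] by blast
  then show ?thesis
    using negligible_open_segments_through negligible_subset by blast
qed (simp add: Int_assoc)

lemma negligible_non_generic:
  "negligible (\<Gamma> ` V \<union> {p. \<not> avoids_vertex_lines p} \<union> {p. \<not> avoids_crossings p})"
proof -
  have "{p. \<not> avoids_vertex_lines p} \<subseteq> (\<Union>a\<in>V. \<Union>b\<in>V - {a}. {p. collinear {\<Gamma> a, \<Gamma> b, p}})"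
    unfolding avoids_vertex_lines_def by blast
  moreover have "negligible (\<Union>a\<in>V. \<Union>b\<in>V - {a}. {p. collinear {\<Gamma> a, \<Gamma> b, p}})"
  proof (intro negligible_UN finite_V finite_Diff)
    fix a b
    assume "a \<in> V" "b \<in> V - {a}"
    then show "negligible {p. collinear {\<Gamma> a, \<Gamma> b, p}}"
      using drawing_inj by (intro negligible_collinear) auto
  qed
  ultimately have "negligible {p. \<not> avoids_vertex_lines p}"
    by (rule negligible_subset[rotated])
  have "{p. \<not> avoids_crossings p} \<subseteq> (\<Union>u\<in>N. \<Union>e\<in>E. \<Union>f\<in>E - {e}.
      {p. open_segment p (\<Gamma> u) \<inter> edge_int \<Gamma> e \<inter> edge_int \<Gamma> f \<noteq> {}})"
    unfolding avoids_crossings_def by blast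
  moreover have "negligible (\<Union>u\<in>N. \<Union>e\<in>E. \<Union>f\<in>E - {e}.
      {p. open_segment p (\<Gamma> u) \<inter> edge_int \<Gamma> e \<inter> edge_int \<Gamma> f \<noteq> {}})"
  proof (intro negligible_UN finite_N finite_E finite_Diff)
    fix u e f
    assume "e \<in> E" "f \<in> E - {e}"
    then show "negligible {p. open_segment p (\<Gamma> u) \<inter> edge_int \<Gamma> e \<inter> edge_int \<Gamma> f \<noteq> {}}"
      by (intro negligible_crossing_lines) auto
  qed
  ultimately have "negligible {p. \<not> avoids_crossings p}"
    by (rule negligible_subset[rotated])
  moreover have "negligible (\<Gamma> ` V)"
    using finite_V by (intro negligible_finite) simp
  ultimately show ?thesis
    using \<open>negligible {p. \<not> avoids_vertex_lines p}\<close> by simp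
qed

lemma generic_point_exists:
  assumes "admissible E \<Gamma> col v \<noteq> {}"
  obtains p where "p \<in> cell \<Gamma> S v" "p \<in> admissible E \<Gamma> col v" "p \<notin> \<Gamma> ` V"
    "avoids_vertex_lines p" "new_edges_clear p" "avoids_crossings p"
proof -
  obtain \<delta> where "\<delta> > 0" and near: "\<And>p. dist p (\<Gamma> v) < \<delta> \<Longrightarrow> p \<in> cell \<Gamma> S v \<and> new_edges_clear p"
    using eventually_conj[OF eventually_in_cell eventually_new_edges_clear]
    unfolding eventually_nhds_metric by blast
  obtain q where "q \<in> admissible E \<Gamma> col v" "dist q (\<Gamma> v) < \<delta>"
    using admissible_near_centre[OF assms \<open>\<delta> > 0\<close>] .
  define U where "U = admissible E \<Gamma> col v \<inter> ball (\<Gamma> v) \<delta>"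
  have "open U"
    by (simp add: U_def open_Int open_admissible)
  moreover have "U \<noteq> {}"
    using \<open>q \<in> admissible E \<Gamma> col v\<close> \<open>dist q (\<Gamma> v) < \<delta>\<close> by (auto simp: U_def dist_commute)
  ultimately have "\<not> negligible U"
    by (rule open_not_negligible)
  then have "\<not> U \<subseteq> \<Gamma> ` V \<union> {p. \<not> avoids_vertex_lines p} \<union> {p. \<not> avoids_crossings p}"
    using negligible_non_generic negligible_subset by blast
  then obtain p where "p \<in> U" and p: "p \<notin> \<Gamma> ` V" "avoids_vertex_lines p" "avoids_crossings p"
    by blast
  then have "dist p (\<Gamma> v) < \<delta>" "p \<in> admissible E \<Gamma> col v"
    by (simp_all add: U_def dist_commute)
  then show thesis
    using that near p by blast
qed

lemma new_edge_disjoint_old_edge: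
  assumes "avoids_vertex_lines p" and "p \<in> admissible E \<Gamma> col v" and "new_edges_clear p"
    and "u \<in> N" and "f \<in> E" and "col f = col {v, u}"
  shows "open_segment p (\<Gamma> u) \<inter> edge_int \<Gamma> f = {}"
proof -
  note off_lines = \<open>avoids_vertex_lines p\<close>[unfolded avoids_vertex_lines_def, rule_format]
  obtain x y where f: "f = {x, y}" "x \<noteq> y" "x \<in> V" "y \<in> V"
    using \<open>f \<in> E\<close> by (rule edgeE)
  consider "u \<in> f" | "u \<notin> f" "v \<in> f" | "u \<notin> f" "v \<notin> f"
    by blast
  then show ?thesis
  proof cases
    case 1
    then obtain y' where y': "f = {u, y'}" "y' \<in> V" "y' \<noteq> u"
      using f by auto
    have "\<not> collinear {\<Gamma> u, p, \<Gamma> y'}"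
      using off_lines[of u y'] neighbourD(2)[OF \<open>u \<in> N\<close>] y' by (simp add: insert_commute)
    then show ?thesis
      unfolding y'(1) edge_int_doubleton open_segment_commute[of p]
      by (rule open_segments_disjoint_if_not_collinear)
  next
    case 2
    then obtain y' where y': "f = {v, y'}" "y' \<noteq> u"
      using f by auto
    then have "y' \<in> N"
      using \<open>f \<in> E\<close> by (simp add: nbhd_def)
    have "\<not> collinear {\<Gamma> v, \<Gamma> u, \<Gamma> y'}"
      using not_collinear[of v u y'] v_in_V neighbourD(2,3) \<open>u \<in> N\<close> \<open>y' \<in> N\<close> y'(2) by fastforce
    moreover have "p \<in> tie \<Gamma> v u y'"
      using admissibleD[OF \<open>p \<in> admissible E \<Gamma> col v\<close> \<open>u \<in> N\<close> \<open>y' \<in> N\<close>] y' \<open>col f = col {v, u}\<close>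
      by auto
    ultimately show ?thesis
      unfolding y'(1) edge_int_doubleton by (rule open_segments_disjoint_if_in_tie)
  next
    case 3
    then show ?thesis
      using \<open>new_edges_clear p\<close> \<open>u \<in> N\<close> \<open>f \<in> E\<close> \<open>col f = col {v, u}\<close>
      unfolding new_edges_clear_def by blast
  qed
qed

lemma new_edges_disjoint:
  assumes "avoids_vertex_lines p" and "u \<in> N" "u' \<in> N" "u \<noteq> u'"
  shows "open_segment p (\<Gamma> u) \<inter> open_segment p (\<Gamma> u') = {}"
proof (rule open_segments_disjoint_if_not_collinear)
  show "\<not> collinear {p, \<Gamma> u, \<Gamma> u'}"
    using assms neighbourD(2) by (simp add: avoids_vertex_lines_def insert_commute)
qed

lemma clone_edgeE:
  assumes "e \<in> clone_edges E v w"
  obtains "e \<in> E" | u where "u \<in> N" and "e = {w, u}"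
  using assms unfolding clone_edges_iff by blast

lemma clone_coloring_range: "e \<in> clone_edges E v w \<Longrightarrow> clone_coloring col v w e \<in> {1..l}"
proof (elim clone_edgeE)
  show "e \<in> E \<Longrightarrow> clone_coloring col v w e \<in> {1..l}"
    using edge_colour_range w_notin_edge by (simp add: clone_coloring_old_edge)
  show "u \<in> N \<Longrightarrow> e = {w, u} \<Longrightarrow> clone_coloring col v w e \<in> {1..l}" for u
    using edge_colour_range neighbourD(1,4) by (simp add: clone_coloring_new_edge)
qed

lemma new_edge_disjoint_same_colour:
  assumes "avoids_vertex_lines p" and "p \<in> admissible E \<Gamma> col v" and "new_edges_clear p"
    and "u \<in> N" and "f \<in> clone_edges E v w" and "{w, u} \<noteq> f"
    and "clone_coloring col v w {w, u} = clone_coloring col v w f"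
  shows "edge_int (\<Gamma>(w := p)) {w, u} \<inter> edge_int (\<Gamma>(w := p)) f = {}"
  using assms(5)
proof (cases rule: clone_edgeE)
  case 1
  have "col f = col {v, u}"
    using assms(7) clone_coloring_new_edge[OF neighbourD(4)[OF assms(4)]]
      clone_coloring_old_edge[OF w_notin_edge[OF 1]] by simp
  then have "open_segment p (\<Gamma> u) \<inter> edge_int \<Gamma> f = {}"
    by (rule new_edge_disjoint_old_edge[OF assms(1-4) 1])
  then show ?thesis
    unfolding edge_int_clone_new[OF assms(4)] edge_int_clone_old[OF 1] .
next
  case (2 u')
  then have "u \<noteq> u'"
    using assms(6) by blast
  then show ?thesis
    using new_edges_disjoint[OF assms(1,4) \<open>u' \<in> N\<close>] assms(4) 2 by (simp add: edge_int_clone_new)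
qed

lemma clone_layer_drawing:
  assumes "p \<notin> \<Gamma> ` V" and "avoids_vertex_lines p" and "p \<in> admissible E \<Gamma> col v"
    and "new_edges_clear p"
  shows "layer_drawing (insert w V) (clone_edges E v w) l (\<Gamma>(w := p)) (clone_coloring col v w)"
proof -
  let ?\<Gamma> = "\<Gamma>(w := p)" and ?E = "clone_edges E v w" and ?col = "clone_coloring col v w"
  have "inj_on \<Gamma> V"
    using drawing by (simp add: layer_drawing_def)
  then have "inj_on ?\<Gamma> (insert w V)"
    using \<open>p \<notin> \<Gamma> ` V\<close> w_notin_V by (auto intro: inj_on_fun_updI)
  moreover have "\<forall>e\<in>?E. ?col e \<in> {1..l}"
    using clone_coloring_range by blast
  moreover have "edge_int ?\<Gamma> e \<inter> edge_int ?\<Gamma> f = {}"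
    if ef: "e \<in> ?E" "f \<in> ?E" "e \<noteq> f" "?col e = ?col f" for e f
  proof (cases "e \<in> E \<and> f \<in> E")
    case True
    then have "col e = col f"
      using ef(4) w_notin_edge by (metis clone_coloring_old_edge)
    then show ?thesis
      using same_colour_edges_disjoint True ef(3) by (simp add: edge_int_clone_old)
  next
    case False
    then consider u where "u \<in> N" "e = {w, u}" | u where "u \<in> N" "f = {w, u}"
      using ef(1,2) unfolding clone_edges_iff by blast
    then show ?thesis
    proof cases
      case 1
      then show ?thesis
        using new_edge_disjoint_same_colour[OF assms(2-4) \<open>u \<in> N\<close> ef(2)] ef(3,4) by simp
    next
      case 2
      then show ?thesis
        using new_edge_disjoint_same_colour[OF assms(2-4) \<open>u \<in> N\<close> ef(1)] ef(3,4)
        by (simp add: Int_commute)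
    qed
  qed
  then have "\<forall>e\<in>?E. \<forall>f\<in>?E. ?col e = ?col f \<longrightarrow> \<not> crosses ?\<Gamma> e f"
    unfolding crosses_def by blast
  ultimately show ?thesis
    unfolding layer_drawing_def by (intro conjI)
qed

lemma clone_not_collinear:
  assumes "avoids_vertex_lines p"
    and "a \<in> insert w V" "b \<in> insert w V" "c \<in> insert w V" and "distinct [a, b, c]"
  shows "\<not> collinear {(\<Gamma>(w := p)) a, (\<Gamma>(w := p)) b, (\<Gamma>(w := p)) c}"
proof -
  note off_lines = assms(1)[unfolded avoids_vertex_lines_def, rule_format]
  consider "a \<in> V" "b \<in> V" "c \<in> V" | "a = w" | "b = w" | "c = w"
    using assms(2-4) by blast
  then show ?thesis
  proof cases
    case 1
    moreover have "a \<noteq> w" "b \<noteq> w" "c \<noteq> w"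
      using 1 w_notin_V by blast+
    ultimately show ?thesis
      using not_collinear assms(5) by simp
  next
    case 2
    then have "b \<in> V" "c \<in> V" "b \<noteq> c" "b \<noteq> w" "c \<noteq> w"
      using assms(2-5) w_notin_V by auto
    with 2 show ?thesis
      using off_lines[of b c] by (simp add: insert_commute)
  next
    case 3
    then have "a \<in> V" "c \<in> V" "a \<noteq> c" "a \<noteq> w" "c \<noteq> w"
      using assms(2-5) w_notin_V by auto
    with 3 show ?thesis
      using off_lines[of a c] by (simp add: insert_commute)
  next
    case 4
    then have "a \<in> V" "b \<in> V" "a \<noteq> b" "a \<noteq> w" "b \<noteq> w"
      using assms(2-5) w_notin_V by auto
    with 4 show ?thesis
      using off_lines[of a b] by (simp add: insert_commute)
  qed
qed

lemma new_edge_no_triple_crossing: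
  assumes "avoids_vertex_lines p" and "avoids_crossings p"
    and "e \<in> clone_edges E v w" "e \<notin> E" "f \<in> clone_edges E v w" "g \<in> clone_edges E v w"
    and "e \<noteq> f" "e \<noteq> g" "f \<noteq> g"
    and x: "x \<in> edge_int (\<Gamma>(w := p)) e" "x \<in> edge_int (\<Gamma>(w := p)) f" "x \<in> edge_int (\<Gamma>(w := p)) g"
  shows False
proof -
  obtain u where u: "u \<in> N" "e = {w, u}"
    using assms(3,4) unfolding clone_edges_iff by blast
  have old: "h \<in> E" if h: "h \<in> clone_edges E v w" "e \<noteq> h" "x \<in> edge_int (\<Gamma>(w := p)) h" for h
    using h(1)
  proof (cases rule: clone_edgeE)
    case (2 u')
    then have "u \<noteq> u'"
      using h(2) u(2) by blast
    then show ?thesis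
      using new_edges_disjoint[OF assms(1) u(1) \<open>u' \<in> N\<close>] h(3) x(1) u 2
      by (auto simp: edge_int_clone_new)
  qed
  have "f \<in> E" "g \<in> E"
    using old[OF assms(5,7) x(2)] old[OF assms(6,8) x(3)] .
  then have "open_segment p (\<Gamma> u) \<inter> edge_int \<Gamma> f \<inter> edge_int \<Gamma> g = {}"
    using assms(2,9) u(1) unfolding avoids_crossings_def by blast
  then show False
    using x unfolding u(2) edge_int_clone_new[OF u(1)] edge_int_clone_old[OF \<open>f \<in> E\<close>]
      edge_int_clone_old[OF \<open>g \<in> E\<close>] by blast
qed

lemma clone_no_triple_crossing:
  assumes "avoids_vertex_lines p" and "avoids_crossings p"
    and e: "e1 \<in> clone_edges E v w" "e2 \<in> clone_edges E v w" "e3 \<in> clone_edges E v w"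
      "e1 \<noteq> e2" "e1 \<noteq> e3" "e2 \<noteq> e3"
    and x: "x \<in> edge_int (\<Gamma>(w := p)) e1" "x \<in> edge_int (\<Gamma>(w := p)) e2"
  shows "x \<notin> edge_int (\<Gamma>(w := p)) e3"
proof
  assume x3: "x \<in> edge_int (\<Gamma>(w := p)) e3"
  consider "e1 \<in> E" "e2 \<in> E" "e3 \<in> E" | "e1 \<notin> E" | "e2 \<notin> E" | "e3 \<notin> E"
    by blast
  then show False
  proof cases
    case 1
    then have "x \<in> edge_int \<Gamma> e1" "x \<in> edge_int \<Gamma> e2" "x \<in> edge_int \<Gamma> e3"
      using x x3 by (simp_all add: edge_int_clone_old)
    then show False
      using no_triple_crossing[OF 1 e(4-6)] by blast
  next
    case 2
    show False
      by (rule new_edge_no_triple_crossing[OF assms(1,2) e(1) 2 e(2,3) e(4-6) x x3])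
  next
    case 3
    show False
      by (rule new_edge_no_triple_crossing[OF assms(1,2) e(2) 3 e(1,3) e(4)[symmetric] e(6,5) x(2,1) x3])
  next
    case 4
    show False
      by (rule new_edge_no_triple_crossing[OF assms(1,2) e(3) 4 e(1,2) e(5)[symmetric] e(6)[symmetric]
            e(4) x3 x])
  qed
qed

lemma clone_general_position:
  assumes "avoids_vertex_lines p" and "avoids_crossings p"
  shows "general_position (insert w V) (clone_edges E v w) (\<Gamma>(w := p))"
proof -
  let ?\<Gamma> = "\<Gamma>(w := p)" and ?E = "clone_edges E v w"
  have "\<not> (\<exists>x. \<exists>e1\<in>?E. \<exists>e2\<in>?E. \<exists>e3\<in>?E. e1 \<noteq> e2 \<and> e1 \<noteq> e3 \<and> e2 \<noteq> e3 \<and>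
      x \<in> edge_int ?\<Gamma> e1 \<and> x \<in> edge_int ?\<Gamma> e2 \<and> x \<in> edge_int ?\<Gamma> e3)"
    using clone_no_triple_crossing[OF assms] by blast
  moreover have "\<forall>a\<in>insert w V. \<forall>b\<in>insert w V. \<forall>c\<in>insert w V. distinct [a, b, c] \<longrightarrow>
      \<not> collinear {?\<Gamma> a, ?\<Gamma> b, ?\<Gamma> c}"
    by (intro ballI impI clone_not_collinear[OF assms(1)])
  ultimately show ?thesis
    unfolding general_position_def by (intro conjI)
qed

end

theorem lemma1:
  fixes V :: "'a set" and E :: "'a set set" and l :: nat
    and \<Gamma> :: "'a \<Rightarrow> real^2" and col :: "'a set \<Rightarrow> nat" and S :: "'a set" and v w :: 'a
  assumes "simple_graph V E"
    and "layer_drawing V E l \<Gamma> col"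
    and "general_position V E \<Gamma>"
    and "vertex_cover V E S"
    and "v \<in> V" and "v \<notin> S"
    and "w \<notin> V"
  shows "(\<exists>p \<in> cell \<Gamma> S v.
            layer_drawing (insert w V) (clone_edges E v w) l (\<Gamma>(w := p)) (clone_coloring col v w) \<and>
            general_position (insert w V) (clone_edges E v w) (\<Gamma>(w := p)))
         \<longleftrightarrow> admissible E \<Gamma> col v \<noteq> {}"
proof -
  interpret vertex_clone V E l \<Gamma> col S v w
    using assms by unfold_locales
  show ?thesis
  proof
    assume "\<exists>p \<in> cell \<Gamma> S v.
      layer_drawing (insert w V) (clone_edges E v w) l (\<Gamma>(w := p)) (clone_coloring col v w) \<and>
      general_position (insert w V) (clone_edges E v w) (\<Gamma>(w := p))"
    then show "admissible E \<Gamma> col v \<noteq> {}"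
      using in_admissible_if_clone_drawing by blast
  next
    assume "admissible E \<Gamma> col v \<noteq> {}"
    then obtain p where "p \<in> cell \<Gamma> S v" "p \<in> admissible E \<Gamma> col v" "p \<notin> \<Gamma> ` V"
      and "avoids_vertex_lines p" "new_edges_clear p" "avoids_crossings p"
      by (rule generic_point_exists)
    then show "\<exists>p \<in> cell \<Gamma> S v.
      layer_drawing (insert w V) (clone_edges E v w) l (\<Gamma>(w := p)) (clone_coloring col v w) \<and>
      general_position (insert w V) (clone_edges E v w) (\<Gamma>(w := p))"
      using clone_layer_drawing clone_general_position by blast
  qed
qed

end
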